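(* Let $H=(\mathcal{V},\mathcal{I})$ be an interval hypergraph and let $t:\mathcal{I}\to\mathcal{V}$ be any representative function with image $R$. Then the co-occurrence graph $G_{R,t}$ is a perfect graph.
   Context: An interval hypergraph is a hypergraph whose vertex set is $[n]=\{1,\dots,n\}$ (with its natural linear order) and whose hyperedges are intervals, i.e. nonempty sets of consecutive integers $\{i,i+1,\dots,j\}$ with $i\leq j$. A representative function is a map $t:\mathcal{I}\to\mathcal{V}$ with $t(I)\in I$ for every $I\in\mathcal{I}$; $R=t(\mathcal{I})$. The co-occurrence graph $G_{R,t}$ is the simple graph with vertex set $R$ in which distinct $u,v\in R$ are adjacent if and only if there is $I\in\mathcal{I}$ with $u,v\in I$ and $t(I)\in\{u,v\}$. A graph is perfect if for every induced subgraph the chromatic number equals the clique number. *)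

theory Defs
  imports Main
begin

definition interval_hypergraph :: "nat \<Rightarrow> nat set set \<Rightarrow> bool" where
  "interval_hypergraph n \<I> \<longleftrightarrow>
     (\<forall>I\<in>\<I>. \<exists>i j. 1 \<le> i \<and> i \<le> j \<and> j \<le> n \<and> I = {i..j})"

definition representative_function :: "nat set set \<Rightarrow> (nat set \<Rightarrow> nat) \<Rightarrow> bool" where
  "representative_function \<I> t \<longleftrightarrow> (\<forall>I\<in>\<I>. t I \<in> I)"

text \<open>Adjacency of the co-occurrence graph G_{R,t}; its vertex set is R = t ` I.\<close>
definition cooc_adj :: "nat set set \<Rightarrow> (nat set \<Rightarrow> nat) \<Rightarrow> nat \<Rightarrow> nat \<Rightarrow> bool" where
  "cooc_adj \<I> t u v \<longleftrightarrow> u \<in> t ` \<I> \<and> v \<in> t ` \<I> \<and> u \<noteq> v \<and>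
     (\<exists>I\<in>\<I>. u \<in> I \<and> v \<in> I \<and> (t I = u \<or> t I = v))"

definition is_clique :: "('a \<Rightarrow> 'a \<Rightarrow> bool) \<Rightarrow> 'a set \<Rightarrow> bool" where
  "is_clique E K \<longleftrightarrow> (\<forall>u\<in>K. \<forall>v\<in>K. u \<noteq> v \<longrightarrow> E u v)"

definition clique_number :: "('a \<Rightarrow> 'a \<Rightarrow> bool) \<Rightarrow> 'a set \<Rightarrow> nat" where
  "clique_number E S = Max {card K | K. K \<subseteq> S \<and> is_clique E K}"

definition is_coloring :: "('a \<Rightarrow> 'a \<Rightarrow> bool) \<Rightarrow> 'a set \<Rightarrow> nat \<Rightarrow> ('a \<Rightarrow> nat) \<Rightarrow> bool" where
  "is_coloring E S k c \<longleftrightarrow> c ` S \<subseteq> {..<k} \<and> (\<forall>u\<in>S. \<forall>v\<in>S. E u v \<longrightarrow> c u \<noteq> c v)"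

definition chromatic_number :: "('a \<Rightarrow> 'a \<Rightarrow> bool) \<Rightarrow> 'a set \<Rightarrow> nat" where
  "chromatic_number E S = (LEAST k. \<exists>c. is_coloring E S k c)"

definition perfect_graph :: "'a set \<Rightarrow> ('a \<Rightarrow> 'a \<Rightarrow> bool) \<Rightarrow> bool" where
  "perfect_graph V E \<longleftrightarrow> finite V \<and> (\<forall>S\<subseteq>V. chromatic_number E S = clique_number E S)"

end

(*
  If u < v < w lie in R and an interval J with t J = u or t J = w contains u and w, then it
  contains v as well, so u and w are adjacent only if u, v or v, w are.  Hence "u < v and u, v
  not adjacent" is a strict partial order on R whose incomparability graph is G_{R,t}.  In an
  incomparability graph the cliques are the antichains, and a colouring whose colour classes are
  chains is proper, so perfection follows from Dilworth's theorem: a finite poset of width w is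
  covered by w chains.

  Dilworth's theorem is proved following Galvin.  Remove a maximal element a, cover the rest by
  w' chains and let x_i be the top element of the i-th chain that lies in some maximum antichain;
  the x_i form an antichain.  Either a is incomparable to all x_i, and the width grows to w' + 1,
  or a lies above some x_i, and removing a together with the part of the i-th chain below x_i
  lowers the width to w' - 1.
*)
theory Submission
  imports Defs
begin

lemma finite_card_subsets: "finite S \<Longrightarrow> finite {card K | K. K \<subseteq> S \<and> Q K}"
  by (rule finite_subset[of _ "card ` Pow S"]) auto

lemma card_le_Max_card_subsets:
  assumes "finite S" "K \<subseteq> S" "Q K"
  shows "card K \<le> Max {card K | K. K \<subseteq> S \<and> Q K}"
  by (rule Max_ge[OF finite_card_subsets[OF assms(1)]]) (use assms in blast)

lemma Max_card_subsets_attained: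
  assumes "finite S" "Q {}"
  obtains K where "K \<subseteq> S" "Q K" "card K = Max {card K | K. K \<subseteq> S \<and> Q K}"
proof -
  have "Max {card K | K. K \<subseteq> S \<and> Q K} \<in> {card K | K. K \<subseteq> S \<and> Q K}"
  proof (rule Max_in[OF finite_card_subsets[OF assms(1)]])
    show "{card K | K. K \<subseteq> S \<and> Q K} \<noteq> {}"
      using assms(2) by auto
  qed
  then show thesis
    using that by auto
qed

lemma card_clique_le_colors:
  assumes "is_clique E K" "K \<subseteq> S" "is_coloring E S k c"
  shows "card K \<le> k"
proof -
  have "inj_on c K"
    using assms unfolding inj_on_def is_clique_def is_coloring_def by blast
  have "c ` K \<subseteq> {..<k}"
    using assms unfolding is_coloring_def by blast
  then have "card (c ` K) \<le> k"
    using card_mono[of "{..<k}"] by fastforce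
  with \<open>inj_on c K\<close> show ?thesis
    by (simp add: card_image)
qed

lemma chromatic_number_le: "is_coloring E S k c \<Longrightarrow> chromatic_number E S \<le> k"
  unfolding chromatic_number_def by (blast intro: Least_le)

lemma clique_number_le_chromatic_number:
  assumes "finite S" "is_coloring E S k c"
  shows "clique_number E S \<le> chromatic_number E S"
proof -
  have "\<exists>c'. is_coloring E S (chromatic_number E S) c'"
    unfolding chromatic_number_def by (rule LeastI_ex) (use assms(2) in blast)
  then obtain c' where c': "is_coloring E S (chromatic_number E S) c'" ..
  obtain K where "K \<subseteq> S" "is_clique E K" "card K = clique_number E S"
    using Max_card_subsets_attained[OF assms(1), of "is_clique E"]
    unfolding clique_number_def by (auto simp: is_clique_def)
  with c' show ?thesis
    using card_clique_le_colors by metis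
qed

locale strict_order =
  fixes less :: "'a \<Rightarrow> 'a \<Rightarrow> bool" (infix "\<prec>" 50)
  assumes asymp_less: "asymp (\<prec>)" and transp_less: "transp (\<prec>)"
begin

definition antichain :: "'a set \<Rightarrow> bool" where
  "antichain A \<longleftrightarrow> (\<forall>x\<in>A. \<forall>y\<in>A. \<not> x \<prec> y)"

definition width :: "'a set \<Rightarrow> nat" where
  "width S = Max {card A | A. A \<subseteq> S \<and> antichain A}"

definition chain_coloring :: "'a set \<Rightarrow> nat \<Rightarrow> ('a \<Rightarrow> nat) \<Rightarrow> bool" where
  "chain_coloring S k c \<longleftrightarrow>
     c ` S \<subseteq> {..<k} \<and> (\<forall>x\<in>S. \<forall>y\<in>S. x \<noteq> y \<longrightarrow> c x = c y \<longrightarrow> x \<prec> y \<or> y \<prec> x)"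

lemma irrefl_less: "\<not> x \<prec> x"
  using asymp_less by (blast dest: asympD)

lemma less_trans: "x \<prec> y \<Longrightarrow> y \<prec> z \<Longrightarrow> x \<prec> z"
  using transp_less by (rule transpD)

lemma card_antichain_le_width: "finite S \<Longrightarrow> A \<subseteq> S \<Longrightarrow> antichain A \<Longrightarrow> card A \<le> width S"
  unfolding width_def by (rule card_le_Max_card_subsets)

lemma maximum_antichain_exists:
  assumes "finite S"
  obtains A where "A \<subseteq> S" "antichain A" "card A = width S"
  using Max_card_subsets_attained[OF assms, of antichain] unfolding width_def antichain_def
  by auto

lemma width_le:
  assumes "finite S" "\<And>A. A \<subseteq> S \<Longrightarrow> antichain A \<Longrightarrow> card A \<le> k"
  shows "width S \<le> k"
  using maximum_antichain_exists[OF assms(1)] assms(2) by metis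

lemma width_mono: "finite T \<Longrightarrow> S \<subseteq> T \<Longrightarrow> width S \<le> width T"
  by (metis card_antichain_le_width finite_subset maximum_antichain_exists order_trans)

lemma chain_coloring_mono: "chain_coloring S k c \<Longrightarrow> k \<le> l \<Longrightarrow> chain_coloring S l c"
  unfolding chain_coloring_def by auto

lemma chain_coloring_insert:
  "chain_coloring S k c \<Longrightarrow> chain_coloring (insert a S) (Suc k) (c(a := k))"
  unfolding chain_coloring_def by (auto simp: less_Suc_eq)

lemma chain_coloring_add_chain:
  assumes "chain_coloring (S - K) k c" "totalp_on K (\<prec>)"
  shows "chain_coloring S (Suc k) (\<lambda>x. if x \<in> K then k else c x)"
  using assms unfolding chain_coloring_def totalp_on_def by (auto simp: less_Suc_eq)

lemma chain_coloring_maximum_antichain: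
  assumes "chain_coloring S k c" "A \<subseteq> S" "antichain A" "card A = k"
  shows "c ` A = {..<k}"
proof -
  have "inj_on c A"
    using assms unfolding inj_on_def chain_coloring_def antichain_def by blast
  then have "card (c ` A) = k"
    using assms(4) by (simp add: card_image)
  moreover have "c ` A \<subseteq> {..<k}"
    using assms(1,2) unfolding chain_coloring_def by blast
  ultimately show ?thesis
    by (simp add: card_subset_eq)
qed

lemma exists_maximal:
  assumes "finite S" "S \<noteq> {}"
  obtains a where "a \<in> S" "\<And>x. x \<in> S \<Longrightarrow> \<not> a \<prec> x"
proof -
  have "asymp_on S (\<prec>)" "transp_on S (\<prec>)"
    using asymp_on_subset[OF asymp_less] transp_on_subset[OF transp_less] by auto
  then show thesis
    using Finite_Set.bex_max_element[OF assms(1) _ _ assms(2)] that irrefl_less by metis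
qed

definition maximum_antichain_points :: "'a set \<Rightarrow> 'a set" where
  "maximum_antichain_points S = \<Union> {A. A \<subseteq> S \<and> antichain A \<and> card A = width S}"

definition top_of_color :: "'a set \<Rightarrow> ('a \<Rightarrow> nat) \<Rightarrow> nat \<Rightarrow> 'a \<Rightarrow> bool" where
  "top_of_color S c i x \<longleftrightarrow> x \<in> maximum_antichain_points S \<and> c x = i \<and>
     (\<forall>z\<in>maximum_antichain_points S. c z = i \<longrightarrow> z = x \<or> z \<prec> x)"

lemma maximum_antichain_points_subset: "maximum_antichain_points S \<subseteq> S"
  unfolding maximum_antichain_points_def by blast

lemma top_of_colorD: "top_of_color S c i x \<Longrightarrow> x \<in> S \<and> c x = i"
  using maximum_antichain_points_subset unfolding top_of_color_def by blast

lemma color_in_maximum_antichain_points: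
  assumes "finite S" "chain_coloring S (width S) c" "i < width S"
  obtains z where "z \<in> maximum_antichain_points S" "c z = i"
proof -
  obtain A where A: "A \<subseteq> S" "antichain A" "card A = width S"
    using maximum_antichain_exists[OF assms(1)] .
  then have "i \<in> c ` A"
    using chain_coloring_maximum_antichain[OF assms(2)] assms(3) by blast
  with A show thesis
    using that unfolding maximum_antichain_points_def by blast
qed

lemma top_of_color_exists:
  assumes "finite S" "chain_coloring S (width S) c" "i < width S"
  shows "\<exists>x. top_of_color S c i x"
proof -
  define D where "D = {z \<in> maximum_antichain_points S. c z = i}"
  have "D \<subseteq> S"
    using maximum_antichain_points_subset D_def by blast
  have "finite D"
    using \<open>D \<subseteq> S\<close> assms(1) by (rule finite_subset)
  have "transp_on D (\<prec>)"
    using transp_on_subset[OF transp_less] by blast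
  have "totalp_on D (\<prec>)"
    using \<open>D \<subseteq> S\<close> assms(2) unfolding D_def chain_coloring_def totalp_on_def by blast
  have "D \<noteq> {}"
    using color_in_maximum_antichain_points[OF assms] D_def by blast
  then obtain x where "x \<in> D" "\<forall>z\<in>D. z \<noteq> x \<longrightarrow> z \<prec> x"
    using Finite_Set.bex_greatest_element[OF \<open>finite D\<close> _ \<open>transp_on D (\<prec>)\<close>
        \<open>totalp_on D (\<prec>)\<close>] by blast
  then have "top_of_color S c i x"
    unfolding top_of_color_def D_def by blast
  then show ?thesis ..
qed

lemma tops_of_colors_antichain:
  assumes "finite S" "chain_coloring S (width S) c"
    and top: "\<And>i. i < width S \<Longrightarrow> top_of_color S c i (x i)"
  shows "antichain (x ` {..<width S})"
  unfolding antichain_def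
proof (intro ballI notI)
  fix u v assume "u \<in> x ` {..<width S}" "v \<in> x ` {..<width S}" "u \<prec> v"
  then obtain i j where ij: "i < width S" "j < width S" "x i \<prec> x j"
    by blast
  obtain A where A: "A \<subseteq> S" "antichain A" "card A = width S" "x j \<in> A"
    using top[OF ij(2)] unfolding top_of_color_def maximum_antichain_points_def by blast
  then have "i \<in> c ` A"
    using chain_coloring_maximum_antichain[OF assms(2)] ij(1) by simp
  then obtain z where "z \<in> A" "c z = i"
    by blast
  then have "z = x i \<or> z \<prec> x i"
    using top[OF ij(1)] A unfolding top_of_color_def maximum_antichain_points_def by blast
  then have "z \<prec> x j"
    using ij(3) less_trans by blast
  with \<open>z \<in> A\<close> A show False
    unfolding antichain_def by blast
qed

lemma width_Diff_below_top_less: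
  assumes "finite S" "chain_coloring S (width S) c" "i < width S" "top_of_color S c i x"
  shows "width (S - {z. c z = i \<and> (z = x \<or> z \<prec> x)}) < width S"
proof -
  let ?L = "{z. c z = i \<and> (z = x \<or> z \<prec> x)}"
  have bound: "card B \<le> width S - 1" if B: "B \<subseteq> S - ?L" "antichain B" for B
  proof -
    have "card B \<le> width S"
      using B assms(1) card_antichain_le_width by blast
    moreover have "card B \<noteq> width S"
    proof
      assume "card B = width S"
      then have "B \<subseteq> maximum_antichain_points S" "c ` B = {..<width S}"
        using B chain_coloring_maximum_antichain[OF assms(2)]
        unfolding maximum_antichain_points_def by blast+
      moreover have "i \<in> c ` B"
        using \<open>c ` B = {..<width S}\<close> assms(3) by simp
      ultimately obtain z where "z \<in> B" "z \<in> maximum_antichain_points S" "c z = i"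
        by blast
      then have "z \<in> ?L"
        using assms(4) unfolding top_of_color_def by blast
      with \<open>z \<in> B\<close> B show False
        by blast
    qed
    ultimately show ?thesis
      by linarith
  qed
  have "width (S - ?L) \<le> width S - 1"
    using assms(1) by (intro width_le bound) simp_all
  with assms(3) show ?thesis
    by linarith
qed

lemma width_insert_above_tops:
  assumes "finite S" "chain_coloring S (width S) c" "a \<notin> S"
    and top: "\<And>i. i < width S \<Longrightarrow> top_of_color S c i (x i)"
    and incomparable: "\<And>i. i < width S \<Longrightarrow> \<not> x i \<prec> a \<and> \<not> a \<prec> x i"
  shows "width S < width (insert a S)"
proof -
  let ?X = "x ` {..<width S}"
  have x: "x i \<in> S" "c (x i) = i" if "i < width S" for i
    using top_of_colorD[OF top[OF that]] by simp_all
  then have "inj_on x {..<width S}"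
    by (metis inj_onI lessThan_iff)
  moreover have "a \<notin> ?X"
    using x(1) \<open>a \<notin> S\<close> by blast
  ultimately have "card (insert a ?X) = Suc (width S)"
    by (simp add: card_image)
  moreover have "antichain (insert a ?X)"
    using tops_of_colors_antichain[OF assms(1,2) top] incomparable irrefl_less
    unfolding antichain_def by blast
  moreover have "insert a ?X \<subseteq> insert a S"
    using x(1) by blast
  ultimately have "card (insert a ?X) \<le> width (insert a S)"
    using card_antichain_le_width \<open>finite S\<close> by (metis finite_insert)
  with \<open>card (insert a ?X) = Suc (width S)\<close> show ?thesis
    by simp
qed

lemma width_insert_maximal_cases:
  assumes "finite S" "chain_coloring S (width S) c" "a \<notin> S" "\<And>z. z \<in> S \<Longrightarrow> \<not> a \<prec> z"
  obtains "width S < width (insert a S)"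
    | K where "a \<in> K" "totalp_on K (\<prec>)" "width (insert a S - K) < width S"
proof -
  have "\<forall>i\<in>{..<width S}. \<exists>y. top_of_color S c i y"
    using top_of_color_exists[OF assms(1,2)] by blast
  then obtain x where x: "\<And>i. i < width S \<Longrightarrow> top_of_color S c i (x i)"
    by (metis bchoice lessThan_iff)
  show thesis
  proof (cases "\<exists>i<width S. x i \<prec> a")
    case False
    then have "\<And>i. i < width S \<Longrightarrow> \<not> x i \<prec> a \<and> \<not> a \<prec> x i"
      using top_of_colorD[OF x] assms(4) by blast
    with width_insert_above_tops[OF assms(1-3) x] that(1) show thesis
      by blast
  next
    case True
    then obtain i where i: "i < width S" "x i \<prec> a"
      by blast
    define L where "L = {z. c z = i \<and> (z = x i \<or> z \<prec> x i)}"
    have "totalp_on (insert a (S \<inter> L)) (\<prec>)"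
    proof (rule totalp_onI)
      fix u v assume "u \<in> insert a (S \<inter> L)" "v \<in> insert a (S \<inter> L)" "u \<noteq> v"
      have below_a: "z \<prec> a" if "z \<in> L" for z
        using that i(2) unfolding L_def by (auto intro: less_trans)
      have "c u = c v" if "u \<in> L" "v \<in> L"
        using that unfolding L_def by simp
      with \<open>u \<in> _\<close> \<open>v \<in> _\<close> \<open>u \<noteq> v\<close> assms(2) below_a show "u \<prec> v \<or> v \<prec> u"
        unfolding chain_coloring_def by blast
    qed
    moreover have "insert a S - insert a (S \<inter> L) = S - L"
      using assms(3) by blast
    moreover have "width (S - L) < width S"
      using width_Diff_below_top_less[OF assms(1,2) i(1) x[OF i(1)]] unfolding L_def .
    ultimately show thesis
      using that(2)[of "insert a (S \<inter> L)"] by simp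
  qed
qed

theorem dilworth:
  assumes "finite S"
  shows "\<exists>c. chain_coloring S (width S) c"
  using assms
proof (induction S rule: finite_psubset_induct)
  case (psubset S)
  show ?case
  proof (cases "S = {}")
    case True
    then show ?thesis
      by (simp add: chain_coloring_def)
  next
    case False
    obtain a where a: "a \<in> S" "\<And>z. z \<in> S \<Longrightarrow> \<not> a \<prec> z"
      using exists_maximal[OF psubset.hyps False] by blast
    define S' where "S' = S - {a}"
    have S': "finite S'" "S' \<subset> S" "a \<notin> S'" "insert a S' = S"
      using psubset.hyps a(1) S'_def by auto
    then have "width S' \<le> width S"
      using psubset.hyps width_mono by blast
    have a_maximal: "\<And>z. z \<in> S' \<Longrightarrow> \<not> a \<prec> z"
      using a(2) S'(2) by blast
    obtain c where c: "chain_coloring S' (width S') c"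
      using psubset.IH[OF \<open>S' \<subset> S\<close>] by blast
    show ?thesis
    proof (rule width_insert_maximal_cases[OF \<open>finite S'\<close> c \<open>a \<notin> S'\<close> a_maximal])
      assume "width S' < width (insert a S')"
      then have "chain_coloring S (width S) (c(a := width S'))"
        using chain_coloring_mono[OF chain_coloring_insert[OF c, of a]] S'(4) by simp
      then show ?thesis
        by blast
    next
      fix K assume K: "a \<in> K" "totalp_on K (\<prec>)" "width (insert a S' - K) < width S'"
      then have "S - K \<subset> S"
        using a(1) by blast
      then obtain c' where "chain_coloring (S - K) (width (S - K)) c'"
        using psubset.IH by blast
      then have "chain_coloring (S - K) (width S' - 1) c'"
        using K(3) S'(4) by (auto intro: chain_coloring_mono)
      then have "chain_coloring S (Suc (width S' - 1)) (\<lambda>z. if z \<in> K then width S' - 1 else c' z)"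
        using K(2) by (rule chain_coloring_add_chain)
      moreover have "Suc (width S' - 1) \<le> width S"
        using K(3) \<open>width S' \<le> width S\<close> by simp
      ultimately have "chain_coloring S (width S) (\<lambda>z. if z \<in> K then width S' - 1 else c' z)"
        by (rule chain_coloring_mono)
      then show ?thesis
        by blast
    qed
  qed
qed

lemma perfect_graph_incomparability:
  assumes "finite V"
    and adj: "\<And>u v. u \<in> V \<Longrightarrow> v \<in> V \<Longrightarrow> E u v \<longleftrightarrow> u \<noteq> v \<and> \<not> u \<prec> v \<and> \<not> v \<prec> u"
  shows "perfect_graph V E"
  unfolding perfect_graph_def
proof (intro conjI allI impI)
  fix S assume "S \<subseteq> V"
  then have "finite S"
    using assms(1) finite_subset by blast
  have adj_S: "E u v \<longleftrightarrow> u \<noteq> v \<and> \<not> u \<prec> v \<and> \<not> v \<prec> u" if "u \<in> S" "v \<in> S" for u v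
    using that \<open>S \<subseteq> V\<close> adj by blast
  have "K \<subseteq> S \<and> is_clique E K \<longleftrightarrow> K \<subseteq> S \<and> antichain K" for K
    unfolding is_clique_def antichain_def by (auto simp: adj_S subsetD) (metis irrefl_less)
  then have clique_number: "clique_number E S = width S"
    unfolding clique_number_def width_def by simp
  obtain c where "chain_coloring S (width S) c"
    using dilworth[OF \<open>finite S\<close>] by blast
  then have "is_coloring E S (width S) c"
    unfolding is_coloring_def chain_coloring_def by (auto simp: adj_S)
  then show "chromatic_number E S = clique_number E S"
    using chromatic_number_le clique_number_le_chromatic_number[OF \<open>finite S\<close>] clique_number
    by (metis le_antisym)
qed (rule assms(1))

end

lemma cooc_adj_sym: "cooc_adj \<I> t u v \<longleftrightarrow> cooc_adj \<I> t v u"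
  unfolding cooc_adj_def by blast

lemma cooc_adj_split:
  assumes "interval_hypergraph n \<I>" "u < v" "v < w" "v \<in> t ` \<I>" "cooc_adj \<I> t u w"
  shows "cooc_adj \<I> t u v \<or> cooc_adj \<I> t v w"
proof -
  obtain J where J: "J \<in> \<I>" "u \<in> J" "w \<in> J" "t J = u \<or> t J = w"
    using assms(5) unfolding cooc_adj_def by blast
  obtain i j where "J = {i..j}"
    using assms(1) J(1) unfolding interval_hypergraph_def by blast
  then have "v \<in> J"
    using J(2,3) assms(2,3) by auto
  with J assms(2-5) show ?thesis
    unfolding cooc_adj_def by auto
qed

definition cooc_less :: "nat set set \<Rightarrow> (nat set \<Rightarrow> nat) \<Rightarrow> nat \<Rightarrow> nat \<Rightarrow> bool" where
  "cooc_less \<I> t u v \<longleftrightarrow> u \<in> t ` \<I> \<and> v \<in> t ` \<I> \<and> u < v \<and> \<not> cooc_adj \<I> t u v"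

lemma strict_order_cooc_less:
  assumes "interval_hypergraph n \<I>"
  shows "strict_order (cooc_less \<I> t)"
proof
  show "asymp (cooc_less \<I> t)"
    by (rule asympI) (simp add: cooc_less_def)
  show "transp (cooc_less \<I> t)"
  proof (rule transpI)
    fix u v w assume "cooc_less \<I> t u v" "cooc_less \<I> t v w"
    then show "cooc_less \<I> t u w"
      using cooc_adj_split[OF assms, of u v w t] unfolding cooc_less_def by auto
  qed
qed

lemma cooc_adj_iff_incomparable:
  assumes "u \<in> t ` \<I>" "v \<in> t ` \<I>"
  shows "cooc_adj \<I> t u v \<longleftrightarrow> u \<noteq> v \<and> \<not> cooc_less \<I> t u v \<and> \<not> cooc_less \<I> t v u"
  using assms cooc_adj_sym[of \<I> t u v] unfolding cooc_less_def cooc_adj_def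
  by (cases u v rule: linorder_cases) auto

lemma finite_interval_hypergraph: "interval_hypergraph n \<I> \<Longrightarrow> finite \<I>"
  unfolding interval_hypergraph_def
  by (rule finite_subset[of _ "Pow {1..n}"]) auto

theorem theorem2:
  fixes n :: nat and \<I> :: "nat set set" and t :: "nat set \<Rightarrow> nat"
  assumes "interval_hypergraph n \<I>"
    and "representative_function \<I> t"
  shows "perfect_graph (t ` \<I>) (cooc_adj \<I> t)"
proof -
  interpret strict_order "cooc_less \<I> t"
    using assms(1) by (rule strict_order_cooc_less)
  show ?thesis
    using finite_interval_hypergraph[OF assms(1)] cooc_adj_iff_incomparable
    by (intro perfect_graph_incomparability) simp_all
qed

end
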